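(* For all ProbNetKAT programs $p,q$: $[\![p]\!] = [\![q]\!]$ (as maps $2^{\mathsf{Pk}}\to\mathcal{D}(2^{\mathsf{Pk}})$) if and only if $\mathcal{B}[\![p]\!] = \mathcal{B}[\![q]\!]$.
   Context: Fix finitely many fields $f_1,\dots,f_k$, each ranging over a finite set of natural numbers. A packet $\pi$ is a record assigning a value to each field; $\pi.f$ is the value of field $f$ and $\pi[f:=n]$ is $\pi$ with field $f$ updated to $n$. $\mathsf{Pk}$ is the finite set of all packets. Syntax. Predicates: $t ::= \mathsf{false} \mid \mathsf{true} \mid f=n \mid t \,\&\, u \mid t ; u \mid \neg t$. Programs: $p ::= t \mid f \leftarrow n \mid p \,\&\, q \mid p ; q \mid p \oplus_r q \mid p^*$ (union, sequencing, probabilistic choice with rational $r\in[0,1]$, iteration). $p^{(0)} := \mathsf{true}$, $p^{(n+1)} := \mathsf{true} \,\&\, (p ; p^{(n)})$. Matrix semantics $\mathcal{B}[\![p]\!]\in[0,1]^{2^{\mathsf{Pk}}\times 2^{\mathsf{Pk}}}$ ($[\varphi]$ = Iverson bracket): $\mathcal{B}[\![\mathsf{false}]\!]_{ab}=[b=\emptyset]$; $\mathcal{B}[\![\mathsf{true}]\!]_{ab}=[a=b]$; $\mathcal{B}[\![f=n]\!]_{ab}=[b=\{\pi\in a:\pi.f=n\}]$; $\mathcal{B}[\![\neg t]\!]_{ab}=[b\subseteq a]\,\mathcal{B}[\![t]\!]_{a,a-b}$; $\mathcal{B}[\![f\leftarrow n]\!]_{ab}=[b=\{\pi[f:=n]:\pi\in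 a\}]$; $\mathcal{B}[\![p\,\&\,q]\!]_{ab}=\sum_{c,d}[c\cup d=b]\,\mathcal{B}[\![p]\!]_{ac}\mathcal{B}[\![q]\!]_{ad}$; $\mathcal{B}[\![p;q]\!]=\mathcal{B}[\![p]\!]\mathcal{B}[\![q]\!]$; $\mathcal{B}[\![p\oplus_r q]\!]=r\mathcal{B}[\![p]\!]+(1-r)\mathcal{B}[\![q]\!]$; $\mathcal{B}[\![p^*]\!]_{ab}=\lim_n\mathcal{B}[\![p^{(n)}]\!]_{ab}$. Denotational semantics: $\mathcal{D}(X)$ = probability distributions on finite $X$; $\delta_x$ Dirac; $\mathcal{D}(g)(\mu)=\mu\circ g^{-1}$; $g^\dagger(\mu)(A)=\sum_x g(x)(A)\mu(x)$; $\mu\times\nu$ product. Order: $\mu\sqsubseteq\nu$ iff $\mu(\{b:a\subseteq b\})\le\nu(\{b:a\subseteq b\})$ for all $a$. $[\![\mathsf{false}]\!](a)=\delta_\emptyset$; $[\![\mathsf{true}]\!](a)=\delta_a$; $[\![f=n]\!](a)=\delta_{\{\pi\in a:\pi.f=n\}}$; $[\![f\leftarrow n]\!](a)=\delta_{\{\pi[f:=n]:\pi\in a\}}$; $[\![\neg t]\!](a)=\mathcal{D}(\lambda b.a-b)([\![t]\!](a))$; $[\![p\,\&\,q]\!](a)=\mathcal{D}(\cup)([\![p]\!](a)\times[\![q]\!](a))$; $[\![p;q]\!](a)=[\![q]\!]^\dagger([\![p]\!](a))$; $[\![p\oplus_r q]\!](a)=r[\![p]\!](a)+(1-r)[\![q]\!](a)$;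 $[\![p^*]\!](a)=\bigsqcup_n[\![p^{(n)}]\!](a)$ (supremum of a $\sqsubseteq$-increasing chain). *)

theory Defs
  imports "HOL-Probability.Probability_Mass_Function"
begin

text \<open>Fields are the elements of a finite type 'f; field f ranges over the finite set
  rng f of naturals.\<close>

type_synonym 'f packet = "'f \<Rightarrow> nat"

definition Pk :: "('f \<Rightarrow> nat set) \<Rightarrow> 'f packet set" where
  "Pk rng = {\<pi>. \<forall>f. \<pi> f \<in> rng f}"

datatype 'f pred =
    PFalse
  | PTrue
  | Test 'f nat
  | PAnd "'f pred" "'f pred"
  | PSeq "'f pred" "'f pred"
  | PNeg "'f pred"

datatype 'f prog =
    Pred "'f pred"
  | Assign 'f nat
  | Union "'f prog" "'f prog"
  | Seq "'f prog" "'f prog"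
  | Choice "'f prog" rat "'f prog"
  | Star "'f prog"

fun wf_pred :: "('f \<Rightarrow> nat set) \<Rightarrow> 'f pred \<Rightarrow> bool" where
  "wf_pred rng PFalse = True"
| "wf_pred rng PTrue = True"
| "wf_pred rng (Test f n) = (n \<in> rng f)"
| "wf_pred rng (PAnd t u) = (wf_pred rng t \<and> wf_pred rng u)"
| "wf_pred rng (PSeq t u) = (wf_pred rng t \<and> wf_pred rng u)"
| "wf_pred rng (PNeg t) = wf_pred rng t"

fun wf_prog :: "('f \<Rightarrow> nat set) \<Rightarrow> 'f prog \<Rightarrow> bool" where
  "wf_prog rng (Pred t) = wf_pred rng t"
| "wf_prog rng (Assign f n) = (n \<in> rng f)"
| "wf_prog rng (Union p q) = (wf_prog rng p \<and> wf_prog rng q)"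
| "wf_prog rng (Seq p q) = (wf_prog rng p \<and> wf_prog rng q)"
| "wf_prog rng (Choice p r q) = (wf_prog rng p \<and> 0 \<le> r \<and> r \<le> 1 \<and> wf_prog rng q)"
| "wf_prog rng (Star p) = wf_prog rng p"

type_synonym 'f mat = "'f packet set \<Rightarrow> 'f packet set \<Rightarrow> real"

definition ind :: "bool \<Rightarrow> real" where
  "ind P = (if P then 1 else 0)"

definition mat_union :: "('f \<Rightarrow> nat set) \<Rightarrow> 'f mat \<Rightarrow> 'f mat \<Rightarrow> 'f mat" where
  "mat_union rng M N a b =
     (\<Sum>c\<in>Pow (Pk rng). \<Sum>d\<in>Pow (Pk rng). ind (c \<union> d = b) * M a c * N a d)"

definition mat_mult :: "('f \<Rightarrow> nat set) \<Rightarrow> 'f mat \<Rightarrow> 'f mat \<Rightarrow> 'f mat" where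
  "mat_mult rng M N a b = (\<Sum>c\<in>Pow (Pk rng). M a c * N c b)"

definition mat_id :: "'f mat" where
  "mat_id a b = ind (a = b)"

text \<open>B[[p^(n)]] computed compositionally: p^(0) = true, p^(n+1) = true & (p ; p^(n)).\<close>
fun mat_iter :: "('f \<Rightarrow> nat set) \<Rightarrow> 'f mat \<Rightarrow> nat \<Rightarrow> 'f mat" where
  "mat_iter rng M 0 = mat_id"
| "mat_iter rng M (Suc n) = mat_union rng mat_id (mat_mult rng M (mat_iter rng M n))"

fun Bpred :: "('f \<Rightarrow> nat set) \<Rightarrow> 'f pred \<Rightarrow> 'f mat" where
  "Bpred rng PFalse a b = ind (b = {})"
| "Bpred rng PTrue a b = ind (a = b)"
| "Bpred rng (Test f n) a b = ind (b = {\<pi>\<in>a. \<pi> f = n})"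
| "Bpred rng (PAnd t u) a b = mat_union rng (Bpred rng t) (Bpred rng u) a b"
| "Bpred rng (PSeq t u) a b = mat_mult rng (Bpred rng t) (Bpred rng u) a b"
| "Bpred rng (PNeg t) a b = ind (b \<subseteq> a) * Bpred rng t a (a - b)"

fun B :: "('f \<Rightarrow> nat set) \<Rightarrow> 'f prog \<Rightarrow> 'f mat" where
  "B rng (Pred t) = Bpred rng t"
| "B rng (Assign f n) = (\<lambda>a b. ind (b = (\<lambda>\<pi>. \<pi>(f := n)) ` a))"
| "B rng (Union p q) = mat_union rng (B rng p) (B rng q)"
| "B rng (Seq p q) = mat_mult rng (B rng p) (B rng q)"
| "B rng (Choice p r q) = (\<lambda>a b. real_of_rat r * B rng p a b + (1 - real_of_rat r) * B rng q a b)"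
| "B rng (Star p) = (\<lambda>a b. lim (\<lambda>n. mat_iter rng (B rng p) n a b))"

type_synonym 'f den = "'f packet set \<Rightarrow> 'f packet set pmf"

definition den_union :: "'f den \<Rightarrow> 'f den \<Rightarrow> 'f den" where
  "den_union P Q a = map_pmf (\<lambda>(x, y). x \<union> y) (pair_pmf (P a) (Q a))"

definition den_seq :: "'f den \<Rightarrow> 'f den \<Rightarrow> 'f den" where
  "den_seq P Q a = bind_pmf (P a) Q"

definition den_choice :: "real \<Rightarrow> 'f den \<Rightarrow> 'f den \<Rightarrow> 'f den" where
  "den_choice r P Q a = bind_pmf (bernoulli_pmf r) (\<lambda>c. if c then P a else Q a)"

definition pmf_le :: "'f packet set pmf \<Rightarrow> 'f packet set pmf \<Rightarrow> bool" where
  "pmf_le \<mu> \<nu> \<longleftrightarrow>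
     (\<forall>a. measure_pmf.prob \<mu> {b. a \<subseteq> b} \<le> measure_pmf.prob \<nu> {b. a \<subseteq> b})"

definition pmf_Sup :: "('f \<Rightarrow> nat set) \<Rightarrow> 'f packet set pmf set \<Rightarrow> 'f packet set pmf" where
  "pmf_Sup rng S = (THE \<mu>. set_pmf \<mu> \<subseteq> Pow (Pk rng) \<and> (\<forall>\<nu>\<in>S. pmf_le \<nu> \<mu>) \<and>
      (\<forall>\<mu>'. set_pmf \<mu>' \<subseteq> Pow (Pk rng) \<longrightarrow> (\<forall>\<nu>\<in>S. pmf_le \<nu> \<mu>') \<longrightarrow> pmf_le \<mu> \<mu>'))"

fun den_iter :: "'f den \<Rightarrow> nat \<Rightarrow> 'f den" where
  "den_iter P 0 = return_pmf"
| "den_iter P (Suc n) = den_union return_pmf (den_seq P (den_iter P n))"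

fun Dpred :: "'f pred \<Rightarrow> 'f den" where
  "Dpred PFalse a = return_pmf {}"
| "Dpred PTrue a = return_pmf a"
| "Dpred (Test f n) a = return_pmf {\<pi>\<in>a. \<pi> f = n}"
| "Dpred (PAnd t u) a = den_union (Dpred t) (Dpred u) a"
| "Dpred (PSeq t u) a = den_seq (Dpred t) (Dpred u) a"
| "Dpred (PNeg t) a = map_pmf (\<lambda>b. a - b) (Dpred t a)"

fun D :: "('f \<Rightarrow> nat set) \<Rightarrow> 'f prog \<Rightarrow> 'f den" where
  "D rng (Pred t) = Dpred t"
| "D rng (Assign f n) = (\<lambda>a. return_pmf ((\<lambda>\<pi>. \<pi>(f := n)) ` a))"
| "D rng (Union p q) = den_union (D rng p) (D rng q)"
| "D rng (Seq p q) = den_seq (D rng p) (D rng q)"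
| "D rng (Choice p r q) = den_choice (real_of_rat r) (D rng p) (D rng q)"
| "D rng (Star p) = (\<lambda>a. pmf_Sup rng (range (\<lambda>n. den_iter (D rng p) n a)))"

end

theory Submission
  imports Defs
begin

text \<open>Both semantics are compositional, so one shows by induction on programs that \<open>[[p]](a)\<close>
  is supported on subsets of \<open>Pk\<close> and that \<open>B[[p]]\<^sub>a\<^sub>b\<close> is the probability that \<open>[[p]](a)\<close>
  outputs \<open>b\<close>; as a distribution on the finite set \<open>2\<^sup>P\<^sup>k\<close> is determined by its masses, this
  gives the equivalence. Each matrix operation is the finite-sum form of the corresponding
  operation on distributions. For \<open>p*\<close>, the iterates \<open>[[p\<^sup>(\<^sup>n\<^sup>)]](a)\<close> form a chain, so the
  probabilities of the up-sets \<open>{b. a \<subseteq> b}\<close> increase and converge. By Moebius inversion over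
  the finite lattice \<open>2\<^sup>P\<^sup>k\<close> (downward induction on \<open>b\<close>) the masses converge as well, to a
  distribution; since up-set probabilities also determine a distribution on \<open>2\<^sup>P\<^sup>k\<close>, this limit
  is the supremum of the chain.\<close>

lemma finite_Pk:
  assumes "\<And>f. finite (rng f)"
  shows "finite (Pk (rng :: 'f::finite \<Rightarrow> nat set))"
proof -
  have "Pk rng = PiE UNIV rng"
    unfolding Pk_def PiE_def Pi_def extensional_def by auto
  then show ?thesis
    using assms by (simp add: finite_PiE)
qed

lemma measure_pmf_prob_eq_sum:
  assumes "finite S" "set_pmf \<mu> \<subseteq> S"
  shows "measure_pmf.prob \<mu> A = (\<Sum>x\<in>A \<inter> S. pmf \<mu> x)"
proof -
  have "measure_pmf.prob \<mu> A = measure_pmf.prob \<mu> (A \<inter> set_pmf \<mu>)"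
    by (simp add: measure_Int_set_pmf)
  also have "A \<inter> set_pmf \<mu> = (A \<inter> S) \<inter> set_pmf \<mu>"
    using assms by auto
  also have "measure_pmf.prob \<mu> \<dots> = (\<Sum>x\<in>A \<inter> S. pmf \<mu> x)"
    using assms by (simp add: measure_Int_set_pmf measure_measure_pmf_finite)
  finally show ?thesis .
qed

lemma pmf_bind_eq_sum:
  assumes "finite S" "set_pmf \<mu> \<subseteq> S"
  shows "pmf (bind_pmf \<mu> f) b = (\<Sum>a\<in>S. pmf \<mu> a * pmf (f a) b)"
  unfolding pmf_bind using assms
  by (subst integral_measure_pmf_real[where A = S]) (auto simp: mult.commute)

lemma pmf_map_union_pair_eq_sum:
  assumes "finite S" "set_pmf \<mu> \<subseteq> S" "set_pmf \<nu> \<subseteq> S"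
  shows "pmf (map_pmf (\<lambda>(x, y). x \<union> y) (pair_pmf \<mu> \<nu>)) b =
    (\<Sum>c\<in>S. \<Sum>d\<in>S. ind (c \<union> d = b) * pmf \<mu> c * pmf \<nu> d)"
proof -
  have "pmf (map_pmf (\<lambda>(x, y). x \<union> y) (pair_pmf \<mu> \<nu>)) b =
      measure_pmf.prob (pair_pmf \<mu> \<nu>) ((\<lambda>(x, y). x \<union> y) -` {b})"
    by (simp add: pmf_map)
  also have "\<dots> = (\<Sum>x\<in>((\<lambda>(x, y). x \<union> y) -` {b}) \<inter> (S \<times> S). pmf (pair_pmf \<mu> \<nu>) x)"
    using assms by (intro measure_pmf_prob_eq_sum) (auto simp: set_pair_pmf)
  also have "\<dots> = (\<Sum>(c, d)\<in>S \<times> S. ind (c \<union> d = b) * pmf (pair_pmf \<mu> \<nu>) (c, d))"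
    using assms(1) by (subst Int_commute, subst sum.inter_restrict) (auto simp: ind_def intro!: sum.cong)
  also have "\<dots> = (\<Sum>c\<in>S. \<Sum>d\<in>S. ind (c \<union> d = b) * pmf \<mu> c * pmf \<nu> d)"
    by (simp add: sum.cartesian_product pmf_pair mult.assoc)
  finally show ?thesis .
qed

lemma pmf_pointwise_limit:
  assumes fin: "finite S" and supp: "\<And>n. set_pmf (\<mu> n) \<subseteq> S"
    and conv: "\<And>x. convergent (\<lambda>n. pmf (\<mu> n) x)"
  obtains \<nu> where "set_pmf \<nu> \<subseteq> S" and "\<And>x. (\<lambda>n. pmf (\<mu> n) x) \<longlonglongrightarrow> pmf \<nu> x"
proof -
  define L where "L x = lim (\<lambda>n. pmf (\<mu> n) x)" for x
  have L: "(\<lambda>n. pmf (\<mu> n) x) \<longlonglongrightarrow> L x" for x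
    unfolding L_def using conv by (simp add: convergent_LIMSEQ_iff)
  have L_nonneg: "0 \<le> L x" for x
    by (rule LIMSEQ_le_const[OF L]) simp
  have L_outside: "L x = 0" if "x \<notin> S" for x
  proof -
    have "pmf (\<mu> n) x = 0" for n
      using that supp[of n] by (auto simp: set_pmf_iff)
    then show ?thesis
      using L[of x] by (simp add: LIMSEQ_const_iff)
  qed
  have "(\<lambda>n. \<Sum>x\<in>S. pmf (\<mu> n) x) \<longlonglongrightarrow> (\<Sum>x\<in>S. L x)"
    by (intro tendsto_sum L)
  then have sum_L: "(\<Sum>x\<in>S. L x) = 1"
    using sum_pmf_eq_1[OF fin supp] by (simp add: LIMSEQ_const_iff)
  have "(\<integral>\<^sup>+x. ennreal (L x) \<partial>count_space UNIV) = (\<integral>\<^sup>+x. ennreal (L x) \<partial>count_space S)"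
    using L_outside
    by (auto simp: nn_integral_count_space_indicator indicator_def intro!: nn_integral_cong)
  also have "\<dots> = 1"
    using fin L_nonneg sum_L by (simp add: nn_integral_count_space_finite)
  finally have pmf_embed: "pmf (embed_pmf L) x = L x" for x
    by (rule pmf_embed_pmf[OF L_nonneg])
  show ?thesis
  proof
    show "set_pmf (embed_pmf L) \<subseteq> S"
      using L_outside by (auto simp: set_pmf_eq pmf_embed)
    show "(\<lambda>n. pmf (\<mu> n) x) \<longlonglongrightarrow> pmf (embed_pmf L) x" for x
      using L by (simp add: pmf_embed)
  qed
qed

lemma tendsto_measure_pmf_prob:
  assumes "finite S" "\<And>n. set_pmf (\<mu> n) \<subseteq> S" "set_pmf \<nu> \<subseteq> S"
    and "\<And>x. (\<lambda>n. pmf (\<mu> n) x) \<longlonglongrightarrow> pmf \<nu> x"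
  shows "(\<lambda>n. measure_pmf.prob (\<mu> n) A) \<longlonglongrightarrow> measure_pmf.prob \<nu> A"
  using assms by (simp add: measure_pmf_prob_eq_sum[where S = S] tendsto_sum)

lemma subset_downward_induct [consumes 2, case_names step]:
  assumes "finite U" "b \<subseteq> U"
    and step: "\<And>b. b \<subseteq> U \<Longrightarrow> (\<And>c. c \<subseteq> U \<Longrightarrow> b \<subset> c \<Longrightarrow> P c) \<Longrightarrow> P b"
  shows "P b"
  using assms(2)
proof (induction b rule: measure_induct_rule[where f = "\<lambda>b. card (U - b)"])
  case (less b)
  show ?case
  proof (rule step[OF less.prems])
    fix c
    assume "c \<subseteq> U" "b \<subset> c"
    then have "card (U - c) < card (U - b)"
      using assms(1) less.prems by (intro psubset_card_mono) auto
    then show "P c"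
      using less.IH \<open>c \<subseteq> U\<close> by blast
  qed
qed

lemma prob_supersets_eq_pmf_plus_sum:
  assumes "finite U" "set_pmf \<mu> \<subseteq> Pow U" "b \<subseteq> U"
  shows "measure_pmf.prob \<mu> {x. b \<subseteq> x} = pmf \<mu> b + (\<Sum>c | c \<subseteq> U \<and> b \<subset> c. pmf \<mu> c)"
proof -
  have "{x. b \<subseteq> x} \<inter> Pow U = insert b {c. c \<subseteq> U \<and> b \<subset> c}"
    using assms(3) by auto
  then show ?thesis
    using assms by (simp add: measure_pmf_prob_eq_sum[where S = "Pow U"])
qed

lemma pmf_eqI_supersets:
  assumes fin: "finite U" and supp: "set_pmf \<mu> \<subseteq> Pow U" "set_pmf \<nu> \<subseteq> Pow U"
    and eq: "\<And>a. measure_pmf.prob \<mu> {x. a \<subseteq> x} = measure_pmf.prob \<nu> {x. a \<subseteq> x}"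
  shows "\<mu> = \<nu>"
proof (rule pmf_eqI)
  fix b
  show "pmf \<mu> b = pmf \<nu> b"
  proof (cases "b \<subseteq> U")
    case True
    with fin show ?thesis
    proof (induction rule: subset_downward_induct)
      case (step b)
      have "(\<Sum>c | c \<subseteq> U \<and> b \<subset> c. pmf \<mu> c) = (\<Sum>c | c \<subseteq> U \<and> b \<subset> c. pmf \<nu> c)"
        using step.IH by (intro sum.cong) auto
      then show ?case
        using prob_supersets_eq_pmf_plus_sum[OF fin supp(1) step.hyps]
          prob_supersets_eq_pmf_plus_sum[OF fin supp(2) step.hyps] eq[of b]
        by linarith
    qed
  next
    case False
    then have "b \<notin> set_pmf \<mu>" "b \<notin> set_pmf \<nu>"
      using supp by auto
    then show ?thesis
      by (simp add: set_pmf_iff)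
  qed
qed

lemma convergent_pmf_if_convergent_supersets:
  assumes fin: "finite U" and supp: "\<And>n. set_pmf (\<mu> n) \<subseteq> Pow U"
    and conv: "\<And>a. convergent (\<lambda>n. measure_pmf.prob (\<mu> n) {x. a \<subseteq> x})"
  shows "convergent (\<lambda>n. pmf (\<mu> n) b)"
proof (cases "b \<subseteq> U")
  case True
  with fin show ?thesis
  proof (induction rule: subset_downward_induct)
    case (step b)
    have "convergent (\<lambda>n. measure_pmf.prob (\<mu> n) {x. b \<subseteq> x} -
        (\<Sum>c | c \<subseteq> U \<and> b \<subset> c. pmf (\<mu> n) c))"
      using step.IH conv by (intro convergent_diff convergent_sum) auto
    then show ?case
      using prob_supersets_eq_pmf_plus_sum[OF fin supp step.hyps] by simp
  qed
next
  case False
  then have "b \<notin> set_pmf (\<mu> n)" for n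
    using supp by auto
  then show ?thesis
    by (simp add: set_pmf_iff convergent_const)
qed

lemma pmf_le_antisym:
  assumes "finite U" "set_pmf \<mu> \<subseteq> Pow U" "set_pmf \<nu> \<subseteq> Pow U"
    and "pmf_le \<mu> \<nu>" "pmf_le \<nu> \<mu>"
  shows "\<mu> = \<nu>"
  using assms by (intro pmf_eqI_supersets[of U]) (auto simp: pmf_le_def intro: order_antisym)

lemma pmf_Sup_eqI:
  assumes fin: "finite (Pk rng)" and supp: "set_pmf \<nu> \<subseteq> Pow (Pk rng)"
    and upper: "\<And>\<mu>. \<mu> \<in> S \<Longrightarrow> pmf_le \<mu> \<nu>"
    and least: "\<And>\<mu>'. set_pmf \<mu>' \<subseteq> Pow (Pk rng) \<Longrightarrow> (\<And>\<mu>. \<mu> \<in> S \<Longrightarrow> pmf_le \<mu> \<mu>') \<Longrightarrow>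
      pmf_le \<nu> \<mu>'"
  shows "pmf_Sup rng S = \<nu>"
  unfolding pmf_Sup_def
proof (rule the_equality)
  show "set_pmf \<nu> \<subseteq> Pow (Pk rng) \<and> (\<forall>\<mu>\<in>S. pmf_le \<mu> \<nu>) \<and>
      (\<forall>\<mu>'. set_pmf \<mu>' \<subseteq> Pow (Pk rng) \<longrightarrow> (\<forall>\<mu>\<in>S. pmf_le \<mu> \<mu>') \<longrightarrow> pmf_le \<nu> \<mu>')"
    using supp upper least by simp
next
  fix \<mu>'
  assume "set_pmf \<mu>' \<subseteq> Pow (Pk rng) \<and> (\<forall>\<mu>\<in>S. pmf_le \<mu> \<mu>') \<and>
      (\<forall>\<mu>''. set_pmf \<mu>'' \<subseteq> Pow (Pk rng) \<longrightarrow> (\<forall>\<mu>\<in>S. pmf_le \<mu> \<mu>'') \<longrightarrow> pmf_le \<mu>' \<mu>'')"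
  then have supp': "set_pmf \<mu>' \<subseteq> Pow (Pk rng)" and upper': "\<And>\<mu>. \<mu> \<in> S \<Longrightarrow> pmf_le \<mu> \<mu>'"
    and "pmf_le \<mu>' \<nu>"
    using supp upper by simp_all
  moreover have "pmf_le \<nu> \<mu>'"
    using least[OF supp' upper'] .
  ultimately show "\<mu>' = \<nu>"
    using pmf_le_antisym[OF fin _ supp] by blast
qed

lemma pmf_Sup_chain:
  assumes fin: "finite (Pk rng)" and supp: "\<And>n. set_pmf (\<mu> n) \<subseteq> Pow (Pk rng)"
    and chain: "\<And>n. pmf_le (\<mu> n) (\<mu> (Suc n))"
  shows "set_pmf (pmf_Sup rng (range \<mu>)) \<subseteq> Pow (Pk rng)"
    and "(\<lambda>n. pmf (\<mu> n) b) \<longlonglongrightarrow> pmf (pmf_Sup rng (range \<mu>)) b"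
proof -
  have inc: "incseq (\<lambda>n. measure_pmf.prob (\<mu> n) {x. a \<subseteq> x})" for a
    using chain unfolding pmf_le_def by (intro incseq_SucI) auto
  have "convergent (\<lambda>n. measure_pmf.prob (\<mu> n) {x. a \<subseteq> x})" for a
    using incseq_convergent[OF inc[of a], of 1] by (auto simp: convergent_def)
  then have "convergent (\<lambda>n. pmf (\<mu> n) b)" for b
    by (rule convergent_pmf_if_convergent_supersets[OF fin supp])
  then obtain \<nu> where supp_\<nu>: "set_pmf \<nu> \<subseteq> Pow (Pk rng)"
    and lim: "\<And>b. (\<lambda>n. pmf (\<mu> n) b) \<longlonglongrightarrow> pmf \<nu> b"
    using pmf_pointwise_limit[of "Pow (Pk rng)" \<mu>] fin supp by blast
  have lim_supersets: "(\<lambda>n. measure_pmf.prob (\<mu> n) {x. a \<subseteq> x}) \<longlonglongrightarrow> measure_pmf.prob \<nu> {x. a \<subseteq> x}"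
    for a using fin supp supp_\<nu> lim by (intro tendsto_measure_pmf_prob) auto
  have "pmf_Sup rng (range \<mu>) = \<nu>"
  proof (rule pmf_Sup_eqI[OF fin supp_\<nu>])
    show "pmf_le \<mu>' \<nu>" if "\<mu>' \<in> range \<mu>" for \<mu>'
      using that incseq_le[OF inc lim_supersets] unfolding pmf_le_def by blast
    show "pmf_le \<nu> \<mu>'" if upper': "\<And>\<mu>''. \<mu>'' \<in> range \<mu> \<Longrightarrow> pmf_le \<mu>'' \<mu>'" for \<mu>'
      unfolding pmf_le_def
    proof
      fix a
      have "measure_pmf.prob (\<mu> n) {x. a \<subseteq> x} \<le> measure_pmf.prob \<mu>' {x. a \<subseteq> x}" for n
        using upper'[of "\<mu> n"] unfolding pmf_le_def by blast
      then show "measure_pmf.prob \<nu> {x. a \<subseteq> x} \<le> measure_pmf.prob \<mu>' {x. a \<subseteq> x}"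
        by (intro LIMSEQ_le_const2[OF lim_supersets]) blast
    qed
  qed
  with supp_\<nu> lim show "set_pmf (pmf_Sup rng (range \<mu>)) \<subseteq> Pow (Pk rng)"
    and "(\<lambda>n. pmf (\<mu> n) b) \<longlonglongrightarrow> pmf (pmf_Sup rng (range \<mu>)) b"
    by simp_all
qed

lemma pmf_le_return:
  assumes "\<And>b. b \<in> set_pmf \<nu> \<Longrightarrow> a \<subseteq> b"
  shows "pmf_le (return_pmf a) \<nu>"
  unfolding pmf_le_def
proof
  fix c
  show "measure_pmf.prob (return_pmf a) {b. c \<subseteq> b} \<le> measure_pmf.prob \<nu> {b. c \<subseteq> b}"
  proof (cases "c \<subseteq> a")
    case True
    then have "measure_pmf.prob \<nu> {b. c \<subseteq> b} = 1"
      using assms by (subst measure_pmf.prob_eq_1) (auto simp: AE_measure_pmf_iff)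
    then show ?thesis
      by simp
  qed simp
qed

lemma pmf_le_map_union:
  assumes "pmf_le \<nu> \<nu>'"
  shows "pmf_le (map_pmf (\<lambda>b. a \<union> b) \<nu>) (map_pmf (\<lambda>b. a \<union> b) \<nu>')"
proof -
  have "(\<lambda>b. a \<union> b) -` {b. c \<subseteq> b} = {b. c - a \<subseteq> b}" for c
    by auto
  then show ?thesis
    using assms unfolding pmf_le_def by simp
qed

lemma pmf_le_bind:
  assumes "\<And>c. pmf_le (f c) (g c)"
  shows "pmf_le (bind_pmf \<mu> f) (bind_pmf \<mu> g)"
  unfolding pmf_le_def
proof
  fix a
  have "emeasure (bind_pmf \<mu> f) {b. a \<subseteq> b} \<le> emeasure (bind_pmf \<mu> g) {b. a \<subseteq> b}"
    unfolding emeasure_bind_pmf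
    using assms unfolding pmf_le_def
    by (intro nn_integral_mono) (simp add: measure_pmf.emeasure_eq_measure)
  then show "measure_pmf.prob (bind_pmf \<mu> f) {b. a \<subseteq> b} \<le> measure_pmf.prob (bind_pmf \<mu> g) {b. a \<subseteq> b}"
    by (simp add: measure_pmf.emeasure_eq_measure)
qed

lemma den_union_return: "den_union return_pmf Q a = map_pmf (\<lambda>b. a \<union> b) (Q a)"
  unfolding den_union_def by (simp add: pair_return_pmf1 pmf.map_comp o_def)

lemma den_iter_Suc_le: "pmf_le (den_iter P n a) (den_iter P (Suc n) a)"
proof (induction n arbitrary: a)
  case 0
  show ?case
    by (auto simp: den_union_return intro: pmf_le_return)
next
  case (Suc n)
  then show ?case
    by (simp add: den_union_return den_seq_def pmf_le_map_union pmf_le_bind)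
qed

definition represents :: "('f \<Rightarrow> nat set) \<Rightarrow> 'f mat \<Rightarrow> 'f den \<Rightarrow> bool" where
  "represents rng M P \<longleftrightarrow>
    (\<forall>a\<subseteq>Pk rng. set_pmf (P a) \<subseteq> Pow (Pk rng) \<and> (\<forall>b\<subseteq>Pk rng. M a b = pmf (P a) b))"

lemma representsI:
  assumes "\<And>a. a \<subseteq> Pk rng \<Longrightarrow> set_pmf (P a) \<subseteq> Pow (Pk rng)"
    and "\<And>a b. a \<subseteq> Pk rng \<Longrightarrow> b \<subseteq> Pk rng \<Longrightarrow> M a b = pmf (P a) b"
  shows "represents rng M P"
  using assms unfolding represents_def by simp

lemma representsD:
  assumes "represents rng M P" "a \<subseteq> Pk rng"
  shows "set_pmf (P a) \<subseteq> Pow (Pk rng)" and "b \<subseteq> Pk rng \<Longrightarrow> M a b = pmf (P a) b"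
  using assms unfolding represents_def by simp_all

lemma represents_eq_iff:
  assumes "represents rng M P" "represents rng N Q"
  shows "(\<forall>a\<subseteq>Pk rng. P a = Q a) \<longleftrightarrow> (\<forall>a\<subseteq>Pk rng. \<forall>b\<subseteq>Pk rng. M a b = N a b)"
proof (intro iffI allI impI)
  fix a b
  assume "\<forall>a\<subseteq>Pk rng. P a = Q a" "a \<subseteq> Pk rng" "b \<subseteq> Pk rng"
  then show "M a b = N a b"
    using assms by (simp add: representsD)
next
  fix a
  assume eq: "\<forall>a\<subseteq>Pk rng. \<forall>b\<subseteq>Pk rng. M a b = N a b" and a: "a \<subseteq> Pk rng"
  show "P a = Q a"
  proof (rule pmf_eqI)
    fix b
    show "pmf (P a) b = pmf (Q a) b"
    proof (cases "b \<subseteq> Pk rng")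
      case True
      then show ?thesis
        using eq a assms by (simp add: representsD)
    next
      case False
      then have "b \<notin> set_pmf (P a)" "b \<notin> set_pmf (Q a)"
        using representsD(1)[OF assms(1) a] representsD(1)[OF assms(2) a] by auto
      then show ?thesis
        by (simp add: set_pmf_iff)
    qed
  qed
qed

lemma represents_id: "represents rng mat_id return_pmf"
  by (rule representsI) (auto simp: mat_id_def ind_def)

lemma represents_union:
  assumes fin: "finite (Pk rng)" and M: "represents rng M P" and N: "represents rng N Q"
  shows "represents rng (mat_union rng M N) (den_union P Q)"
proof (rule representsI)
  fix a
  assume a: "a \<subseteq> Pk rng"
  note supp = representsD(1)[OF M a] representsD(1)[OF N a]
  then show "set_pmf (den_union P Q a) \<subseteq> Pow (Pk rng)"
    by (auto simp: den_union_def set_pair_pmf)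
  fix b
  have "mat_union rng M N a b =
      (\<Sum>c\<in>Pow (Pk rng). \<Sum>d\<in>Pow (Pk rng). ind (c \<union> d = b) * pmf (P a) c * pmf (Q a) d)"
    unfolding mat_union_def using a
    by (auto simp: representsD[OF M] representsD[OF N] intro!: sum.cong)
  also have "\<dots> = pmf (den_union P Q a) b"
    unfolding den_union_def using fin supp by (intro pmf_map_union_pair_eq_sum[symmetric]) auto
  finally show "mat_union rng M N a b = pmf (den_union P Q a) b" .
qed

lemma represents_seq:
  assumes fin: "finite (Pk rng)" and M: "represents rng M P" and N: "represents rng N Q"
  shows "represents rng (mat_mult rng M N) (den_seq P Q)"
proof (rule representsI)
  fix a
  assume a: "a \<subseteq> Pk rng"
  note supp = representsD(1)[OF M a]
  show "set_pmf (den_seq P Q a) \<subseteq> Pow (Pk rng)"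
    using supp representsD(1)[OF N] by (auto simp: den_seq_def)
  fix b
  assume b: "b \<subseteq> Pk rng"
  have "mat_mult rng M N a b = (\<Sum>c\<in>Pow (Pk rng). pmf (P a) c * pmf (Q c) b)"
    unfolding mat_mult_def using a b
    by (auto simp: representsD[OF M] representsD[OF N] intro!: sum.cong)
  also have "\<dots> = pmf (den_seq P Q a) b"
    unfolding den_seq_def using fin supp by (intro pmf_bind_eq_sum[symmetric]) auto
  finally show "mat_mult rng M N a b = pmf (den_seq P Q a) b" .
qed

lemma represents_choice:
  assumes M: "represents rng M P" and N: "represents rng N Q" and r: "0 \<le> r" "r \<le> 1"
  shows "represents rng (\<lambda>a b. r * M a b + (1 - r) * N a b) (den_choice r P Q)"
proof (rule representsI)
  fix a
  assume a: "a \<subseteq> Pk rng"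
  have "set_pmf (den_choice r P Q a) \<subseteq> set_pmf (P a) \<union> set_pmf (Q a)"
    by (auto simp: den_choice_def split: if_splits)
  then show "set_pmf (den_choice r P Q a) \<subseteq> Pow (Pk rng)"
    using representsD(1)[OF M a] representsD(1)[OF N a] by blast
  fix b
  assume "b \<subseteq> Pk rng"
  then show "r * M a b + (1 - r) * N a b = pmf (den_choice r P Q a) b"
    using a r by (simp add: den_choice_def pmf_bind representsD[OF M] representsD[OF N])
qed

lemma represents_assign:
  assumes "n \<in> rng f"
  shows "represents rng (\<lambda>a b. ind (b = (\<lambda>\<pi>. \<pi>(f := n)) ` a))
    (\<lambda>a. return_pmf ((\<lambda>\<pi>. \<pi>(f := n)) ` a))"
proof (rule representsI)
  fix a
  assume "a \<subseteq> Pk rng"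
  then have "(\<lambda>\<pi>. \<pi>(f := n)) ` a \<subseteq> Pk rng"
    using assms by (auto simp: Pk_def)
  then show "set_pmf (return_pmf ((\<lambda>\<pi>. \<pi>(f := n)) ` a)) \<subseteq> Pow (Pk rng)"
    by simp
qed (auto simp: ind_def)

lemma set_pmf_Dpred_subset: "set_pmf (Dpred t a) \<subseteq> Pow a"
proof (induction t arbitrary: a)
  case (PAnd t u)
  then show ?case
    by (fastforce simp: den_union_def set_pair_pmf)
next
  case (PSeq t u)
  then show ?case
    by (fastforce simp: den_seq_def)
qed auto

lemma represents_Bpred_Dpred:
  assumes fin: "finite (Pk rng)"
  shows "represents rng (Bpred rng t) (Dpred t)"
proof (induction t)
  case (PAnd t u)
  have "Bpred rng (PAnd t u) = mat_union rng (Bpred rng t) (Bpred rng u)"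
    and "Dpred (PAnd t u) = den_union (Dpred t) (Dpred u)"
    by (simp_all add: fun_eq_iff)
  then show ?case
    using represents_union[OF fin PAnd.IH] by simp
next
  case (PSeq t u)
  have "Bpred rng (PSeq t u) = mat_mult rng (Bpred rng t) (Bpred rng u)"
    and "Dpred (PSeq t u) = den_seq (Dpred t) (Dpred u)"
    by (simp_all add: fun_eq_iff)
  then show ?case
    using represents_seq[OF fin PSeq.IH] by simp
next
  case (PNeg t)
  show ?case
  proof (rule representsI)
    fix a b
    assume a: "a \<subseteq> Pk rng" and "b \<subseteq> Pk rng"
    show "set_pmf (Dpred (PNeg t) a) \<subseteq> Pow (Pk rng)"
      using a by auto
    have "pmf (Dpred (PNeg t) a) b =
        measure_pmf.prob (Dpred t a) ((\<lambda>c. a - c) -` {b} \<inter> set_pmf (Dpred t a))"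
      by (simp add: pmf_map measure_Int_set_pmf)
    also have "(\<lambda>c. a - c) -` {b} \<inter> set_pmf (Dpred t a) =
        (if b \<subseteq> a then {a - b} \<inter> set_pmf (Dpred t a) else {})"
      using set_pmf_Dpred_subset[of t a] by auto
    also have "measure_pmf.prob (Dpred t a) \<dots> = ind (b \<subseteq> a) * pmf (Dpred t a) (a - b)"
      by (simp add: measure_Int_set_pmf measure_pmf_single ind_def)
    also have "\<dots> = Bpred rng (PNeg t) a b"
    proof -
      have "a - b \<subseteq> Pk rng"
        using a by blast
      then show ?thesis
        using representsD(2)[OF PNeg a] by simp
    qed
    finally show "Bpred rng (PNeg t) a b = pmf (Dpred (PNeg t) a) b" ..
  qed
qed (rule representsI; auto simp: ind_def)+

lemma represents_iter:
  assumes fin: "finite (Pk rng)" and "represents rng M P"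
  shows "represents rng (mat_iter rng M n) (den_iter P n)"
  by (induction n) (simp_all add: assms represents_id represents_union represents_seq)

lemma represents_star:
  assumes fin: "finite (Pk rng)" and M: "represents rng M P"
  shows "represents rng (\<lambda>a b. lim (\<lambda>n. mat_iter rng M n a b))
    (\<lambda>a. pmf_Sup rng (range (\<lambda>n. den_iter P n a)))"
proof (rule representsI)
  fix a
  assume a: "a \<subseteq> Pk rng"
  have "set_pmf (den_iter P n a) \<subseteq> Pow (Pk rng)" for n
    using representsD(1)[OF represents_iter[OF fin M] a] .
  note chain = pmf_Sup_chain[of rng "\<lambda>n. den_iter P n a", OF fin this den_iter_Suc_le]
  show "set_pmf (pmf_Sup rng (range (\<lambda>n. den_iter P n a))) \<subseteq> Pow (Pk rng)"
    by (rule chain(1))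
  fix b
  assume "b \<subseteq> Pk rng"
  then have "mat_iter rng M n a b = pmf (den_iter P n a) b" for n
    using representsD(2)[OF represents_iter[OF fin M] a] by blast
  then show "lim (\<lambda>n. mat_iter rng M n a b) = pmf (pmf_Sup rng (range (\<lambda>n. den_iter P n a))) b"
    using chain(2) by (simp add: limI)
qed

lemma represents_B_D:
  assumes fin: "finite (Pk rng)" and "wf_prog rng p"
  shows "represents rng (B rng p) (D rng p)"
  using assms(2)
proof (induction p)
  case (Pred t)
  then show ?case
    by (simp add: represents_Bpred_Dpred[OF fin])
next
  case (Assign f n)
  then show ?case
    by (simp add: represents_assign)
next
  case (Union p q)
  then show ?case
    by (simp add: represents_union[OF fin])
next
  case (Seq p q)
  then show ?case
    by (simp add: represents_seq[OF fin])
next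
  case (Choice p r q)
  then show ?case
    by (simp add: represents_choice)
next
  case (Star p)
  then show ?case
    by (simp add: represents_star[OF fin])
qed

theorem corollary3p2:
  fixes rng :: "('f::finite) \<Rightarrow> nat set" and p q :: "'f prog"
  assumes "\<forall>f. finite (rng f)"
    and "wf_prog rng p" and "wf_prog rng q"
  shows "(\<forall>a\<subseteq>Pk rng. D rng p a = D rng q a) \<longleftrightarrow>
         (\<forall>a\<subseteq>Pk rng. \<forall>b\<subseteq>Pk rng. B rng p a b = B rng q a b)"
proof -
  have fin: "finite (Pk rng)"
    using assms(1) by (simp add: finite_Pk)
  show ?thesis
    using represents_B_D[OF fin assms(2)] represents_B_D[OF fin assms(3)]
    by (rule represents_eq_iff)
qed

end
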